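(* There are constants $c>0$ and $\lambda\geq 1$ such that for all sufficiently large $n$ and all parameters $r\ge 0$, $0<\epsilon\leq 1$, $R$ with $\epsilon<R$ and $c\sqrt{\log n}\leq R\leq\sqrt n$ the following holds. Let $m=\lceil\sqrt{5n}/R\rceil$ and partition the square $[0,\sqrt n]^2$ into $m\times m$ congruent square cells. If the positions $P_{1},\dots,P_{n}$ of the $n$ nodes are independent, each distributed according to the stationary distribution $\pi$ of the single-node random walk on $M_{n,r,\epsilon}$, then with probability at least $1-1/n^2$, every cell contains at least $R^2/\lambda$ and at most $\lambda R^2$ nodes.
   Context: $L_{n,\epsilon}=\{(i\epsilon,j\epsilon): i,j\in\mathbb{N},\ i,j\le\sqrt n/\epsilon\}$. The move graph $M_{n,r,\epsilon}$ has vertex set $L_{n,\epsilon}$ and edges between $\mathbf{x},\mathbf{y}$ with Euclidean distance $d(\mathbf{x},\mathbf{y})\le r$; $\Gamma(\mathbf{x})=\{\mathbf{y}\in L_{n,\epsilon}: d(\mathbf{x},\mathbf{y})\le r\}$ (it contains $\mathbf{x}$). Each node moves by a Markov chain: from position $\mathbf{x}$ it moves to a uniformly random point of $\Gamma(\mathbf{x})$. Its stationary distribution is $\pi(\mathbf{x})=|\Gamma(\mathbf{x})|/\sum_{\mathbf{y}\in L_{n,\epsilon}}|\Gamma(\mathbf{y})|$. A node belongs to a cell if its position lies in the cell (for points on cell boundaries, each point of $L_{n,\epsilon}$ is assigned to exactly one cell). *)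

theory Defs
  imports "HOL-Analysis.Analysis"
begin

definition lattice :: "nat \<Rightarrow> real \<Rightarrow> (real \<times> real) set" where
  "lattice n \<epsilon> = {(real i * \<epsilon>, real j * \<epsilon>) | i j :: nat.
       real i \<le> sqrt (real n) / \<epsilon> \<and> real j \<le> sqrt (real n) / \<epsilon>}"

definition edist :: "real \<times> real \<Rightarrow> real \<times> real \<Rightarrow> real" where
  "edist x y = sqrt ((fst x - fst y)^2 + (snd x - snd y)^2)"

definition Gamma :: "nat \<Rightarrow> real \<Rightarrow> real \<Rightarrow> real \<times> real \<Rightarrow> (real \<times> real) set" where
  "Gamma n r \<epsilon> x = {y \<in> lattice n \<epsilon>. edist x y \<le> r}"

definition stat_dist :: "nat \<Rightarrow> real \<Rightarrow> real \<Rightarrow> real \<times> real \<Rightarrow> real" where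
  "stat_dist n r \<epsilon> x =
     real (card (Gamma n r \<epsilon> x)) / (\<Sum>y\<in>lattice n \<epsilon>. real (card (Gamma n r \<epsilon> y)))"

definition num_cells :: "nat \<Rightarrow> real \<Rightarrow> nat" where
  "num_cells n R = nat \<lceil>sqrt (5 * real n) / R\<rceil>"

definition cell_set :: "nat \<Rightarrow> nat \<Rightarrow> nat \<times> nat \<Rightarrow> (real \<times> real) set" where
  "cell_set n m ab =
     (let s = sqrt (real n) / real m in
       {real (fst ab) * s .. real (fst ab + 1) * s} \<times> {real (snd ab) * s .. real (snd ab + 1) * s})"

definition valid_assignment :: "nat \<Rightarrow> real \<Rightarrow> nat \<Rightarrow> (real \<times> real \<Rightarrow> nat \<times> nat) \<Rightarrow> bool" where
  "valid_assignment n \<epsilon> m cell \<longleftrightarrow>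
     (\<forall>x\<in>lattice n \<epsilon>. fst (cell x) < m \<and> snd (cell x) < m \<and> x \<in> cell_set n m (cell x))"

definition cell_count :: "nat \<Rightarrow> (real \<times> real \<Rightarrow> nat \<times> nat) \<Rightarrow> (nat \<Rightarrow> real \<times> real) \<Rightarrow> nat \<times> nat \<Rightarrow> nat" where
  "cell_count n cell P ab = card {i \<in> {..<n}. cell (P i) = ab}"

text \<open>Probability of an event on the positions, when P_0..P_{n-1} are i.i.d. with law pi
  (product distribution on the finite set of configurations).\<close>
definition config_prob :: "nat \<Rightarrow> real \<Rightarrow> real \<Rightarrow> ((nat \<Rightarrow> real \<times> real) \<Rightarrow> bool) \<Rightarrow> real" where
  "config_prob n r \<epsilon> E =
     (\<Sum>P \<in> {P \<in> PiE {..<n} (\<lambda>_. lattice n \<epsilon>). E P}. \<Prod>i<n. stat_dist n r \<epsilon> (P i))"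

end

theory Submission
  imports Defs
begin

text \<open>
  The positions \<open>P\<^sub>0, \<dots>, P\<^sub>n\<^sub>-\<^sub>1\<close> are i.i.d. with law \<open>\<pi>\<close>, so the number of
  nodes in a fixed cell is binomial with mean \<open>n \<pi>(cell)\<close>.

  (1) Probability on finite product spaces: complement rule, union bound, Markov's
      inequality and the moment generating function of a binomial count, giving the two
      Chernoff tail bounds.
  (2) Near-uniformity of \<open>\<pi>\<close>: any two neighbourhoods \<open>\<Gamma>(x)\<close>, \<open>\<Gamma>(y)\<close> differ in size by at
      most the factor 4 (translate and fold each coordinate into the square, a distance
      non-increasing map that is at most 4-to-1), so \<open>\<pi>(C)\<close> is within the factor 4 of
      \<open>|C| / |L\<^sub>n\<^sub>,\<^sub>\<epsilon>|\<close> for every set of lattice points \<open>C\<close>.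
  (3) Counting lattice points: a cell has side between \<open>R/4\<close> and \<open>R/2\<close> and contains
      \<open>\<Theta>((side/\<epsilon>)\<^sup>2)\<close> of the \<open>\<Theta>(n/\<epsilon>\<^sup>2)\<close> lattice points, hence \<open>n \<pi>(cell) = \<Theta>(R\<^sup>2)\<close>.
  Chernoff then bounds the failure probability of one cell by \<open>2 exp(-R\<^sup>2/4096)\<close>, which is
  at most \<open>2/n\<^sup>4\<close> for \<open>R \<ge> 128 \<surd>(ln n)\<close>; a union bound over the at most \<open>n\<close> cells
  gives the theorem with \<open>c = 128\<close>, \<open>\<lambda> = 4096\<close> and \<open>n \<ge> 3\<close>.
\<close>

definition prod_prob :: "'a set \<Rightarrow> ('a \<Rightarrow> real) \<Rightarrow> nat \<Rightarrow> ((nat \<Rightarrow> 'a) \<Rightarrow> bool) \<Rightarrow> real" where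
  "prod_prob L \<pi> n E = (\<Sum>P \<in> {P \<in> PiE {..<n} (\<lambda>_. L). E P}. \<Prod>i<n. \<pi> (P i))"

definition prob_dist_on :: "'a set \<Rightarrow> ('a \<Rightarrow> real) \<Rightarrow> bool" where
  "prob_dist_on L \<pi> \<longleftrightarrow> finite L \<and> (\<forall>x\<in>L. 0 \<le> \<pi> x) \<and> (\<Sum>x\<in>L. \<pi> x) = 1"

lemma prod_weight_nonneg:
  fixes \<pi> :: "'a \<Rightarrow> real"
  assumes "prob_dist_on L \<pi>" "P \<in> PiE {..<n} (\<lambda>_. L)"
  shows "0 \<le> (\<Prod>i<n. \<pi> (P i))"
  using assms by (intro prod_nonneg) (auto simp: prob_dist_on_def PiE_def Pi_def)

lemma prod_expectation:
  fixes f :: "'a \<Rightarrow> real"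
  assumes "finite L"
  shows "(\<Sum>P\<in>PiE {..<n} (\<lambda>_. L). \<Prod>i<n. f (P i)) = (\<Sum>x\<in>L. f x) ^ n"
  using prod_sum_PiE[of "{..<n}" "\<lambda>_. L" "\<lambda>_ x. f x"] assms by simp

lemma prod_prob_compl:
  fixes \<pi> :: "'a \<Rightarrow> real"
  assumes "prob_dist_on L \<pi>"
  shows "prod_prob L \<pi> n E = 1 - prod_prob L \<pi> n (\<lambda>P. \<not> E P)"
proof -
  let ?\<Omega> = "PiE {..<n} (\<lambda>_. L)"
  have fin: "finite ?\<Omega>" using assms by (simp add: prob_dist_on_def finite_PiE)
  have "(\<Sum>P\<in>?\<Omega>. \<Prod>i<n. \<pi> (P i)) = 1"
    using prod_expectation[of L \<pi> n] assms by (simp add: prob_dist_on_def)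
  moreover have "(\<Sum>P\<in>?\<Omega>. \<Prod>i<n. \<pi> (P i)) = prod_prob L \<pi> n E + prod_prob L \<pi> n (\<lambda>P. \<not> E P)"
    unfolding prod_prob_def using fin
    by (subst sum.union_disjoint[symmetric]) (auto intro!: sum.cong)
  ultimately show ?thesis by simp
qed

lemma prod_prob_mono:
  fixes \<pi> :: "'a \<Rightarrow> real"
  assumes "prob_dist_on L \<pi>" "\<And>P. E P \<Longrightarrow> F P"
  shows "prod_prob L \<pi> n E \<le> prod_prob L \<pi> n F"
  unfolding prod_prob_def using assms prod_weight_nonneg[OF assms(1)]
  by (intro sum_mono2) (auto simp: prob_dist_on_def finite_PiE)

lemma prod_prob_disj:
  fixes \<pi> :: "'a \<Rightarrow> real"
  assumes "prob_dist_on L \<pi>"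
  shows "prod_prob L \<pi> n (\<lambda>P. E P \<or> F P) \<le> prod_prob L \<pi> n E + prod_prob L \<pi> n F"
proof -
  let ?\<Omega> = "PiE {..<n} (\<lambda>_. L)"
  have "{P\<in>?\<Omega>. E P \<or> F P} = {P\<in>?\<Omega>. E P} \<union> {P\<in>?\<Omega>. F P}" by auto
  moreover have "finite ?\<Omega>" using assms by (simp add: prob_dist_on_def finite_PiE)
  ultimately show ?thesis
    unfolding prod_prob_def using prod_weight_nonneg[OF assms]
    by (simp add: sum_Un) (auto intro!: sum_nonneg)
qed

lemma prod_prob_union_bound:
  fixes \<pi> :: "'a \<Rightarrow> real"
  assumes "prob_dist_on L \<pi>" "finite S"
  shows "prod_prob L \<pi> n (\<lambda>P. \<exists>s\<in>S. E s P) \<le> (\<Sum>s\<in>S. prod_prob L \<pi> n (E s))"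
  using assms(2)
proof (induction S rule: finite_induct)
  case empty
  then show ?case by (simp add: prod_prob_def)
next
  case (insert s S)
  have "prod_prob L \<pi> n (\<lambda>P. \<exists>s'\<in>insert s S. E s' P)
      \<le> prod_prob L \<pi> n (E s) + prod_prob L \<pi> n (\<lambda>P. \<exists>s'\<in>S. E s' P)"
    using prod_prob_disj[OF assms(1), of n "E s" "\<lambda>P. \<exists>s'\<in>S. E s' P"] by simp
  then show ?case using insert by simp
qed

lemma prod_prob_markov:
  fixes \<pi> :: "'a \<Rightarrow> real"
  assumes "prob_dist_on L \<pi>" "\<And>P. 0 \<le> f P" "\<And>P. E P \<Longrightarrow> 1 \<le> f P"
  shows "prod_prob L \<pi> n E \<le> (\<Sum>P\<in>PiE {..<n} (\<lambda>_. L). (\<Prod>i<n. \<pi> (P i)) * f P)"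
proof -
  let ?\<Omega> = "PiE {..<n} (\<lambda>_. L)"
  have fin: "finite ?\<Omega>" using assms by (simp add: prob_dist_on_def finite_PiE)
  have "prod_prob L \<pi> n E \<le> (\<Sum>P\<in>{P\<in>?\<Omega>. E P}. (\<Prod>i<n. \<pi> (P i)) * f P)"
    unfolding prod_prob_def
  proof (rule sum_mono)
    fix P assume "P \<in> {P\<in>?\<Omega>. E P}"
    then show "(\<Prod>i<n. \<pi> (P i)) \<le> (\<Prod>i<n. \<pi> (P i)) * f P"
      using assms prod_weight_nonneg[OF assms(1)] by (metis mem_Collect_eq mult.right_neutral mult_left_mono)
  qed
  also have "\<dots> \<le> (\<Sum>P\<in>?\<Omega>. (\<Prod>i<n. \<pi> (P i)) * f P)"
    by (rule sum_mono2) (use fin assms prod_weight_nonneg[OF assms(1)] in \<open>auto intro!: mult_nonneg_nonneg\<close>)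
  finally show ?thesis .
qed

lemma mgf_count:
  fixes t :: real and \<pi> :: "'a \<Rightarrow> real"
  assumes "prob_dist_on L \<pi>"
  shows "(\<Sum>P\<in>PiE {..<n} (\<lambda>_. L). (\<Prod>i<n. \<pi> (P i)) * exp (t * card {i\<in>{..<n}. Q (P i)}))
       = (1 + (\<Sum>x\<in>{x\<in>L. Q x}. \<pi> x) * (exp t - 1)) ^ n"
proof -
  define f where "f x = \<pi> x * (1 + of_bool (Q x) * (exp t - 1))" for x
  have exp_bool: "exp (t * of_bool b) = 1 + of_bool b * (exp t - 1)" for b by (cases b) auto
  have "(\<Prod>i<n. \<pi> (P i)) * exp (t * card {i\<in>{..<n}. Q (P i)}) = (\<Prod>i<n. f (P i))" for P
  proof -
    have "real (card {i\<in>{..<n}. Q (P i)}) = (\<Sum>i<n. of_bool (Q (P i)))"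
      by (simp add: Int_def)
    then have "exp (t * card {i\<in>{..<n}. Q (P i)}) = exp (\<Sum>i<n. t * of_bool (Q (P i)))"
      by (simp only: sum_distrib_left)
    also have "\<dots> = (\<Prod>i<n. exp (t * of_bool (Q (P i))))"
      by (rule exp_sum) simp
    also have "\<dots> = (\<Prod>i<n. 1 + of_bool (Q (P i)) * (exp t - 1))"
      unfolding exp_bool ..
    finally have "exp (t * card {i\<in>{..<n}. Q (P i)}) = (\<Prod>i<n. 1 + of_bool (Q (P i)) * (exp t - 1))" .
    then show ?thesis by (simp add: f_def prod.distrib)
  qed
  moreover have "(\<Sum>x\<in>L. f x) = 1 + (\<Sum>x\<in>{x\<in>L. Q x}. \<pi> x) * (exp t - 1)"
  proof -
    have "(\<Sum>x\<in>L. f x) = (\<Sum>x\<in>L. \<pi> x) + (\<Sum>x\<in>L. \<pi> x * of_bool (Q x)) * (exp t - 1)"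
      by (simp add: f_def distrib_left sum.distrib sum_distrib_right mult.assoc)
    then show ?thesis using assms by (simp add: prob_dist_on_def Int_def)
  qed
  ultimately show ?thesis using prod_expectation[of L f n] assms by (simp add: prob_dist_on_def)
qed

text \<open>The bound \<open>E[e\<^sup>t\<^sup>N] \<le> exp(n p (e\<^sup>t - 1))\<close>, from \<open>1 + x \<le> e\<^sup>x\<close>.\<close>
lemma mgf_count_bound:
  fixes t :: real and n :: nat and \<pi> :: "'a \<Rightarrow> real"
  assumes "prob_dist_on L \<pi>"
  shows "(\<Sum>P\<in>PiE {..<n} (\<lambda>_. L). (\<Prod>i<n. \<pi> (P i)) * exp (t * card {i\<in>{..<n}. Q (P i)}))
       \<le> exp (n * (\<Sum>x\<in>{x\<in>L. Q x}. \<pi> x) * (exp t - 1))"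
proof -
  define p where "p = (\<Sum>x\<in>{x\<in>L. Q x}. \<pi> x)"
  have "0 \<le> p"
    using assms unfolding p_def prob_dist_on_def by (auto intro!: sum_nonneg)
  have "p \<le> (\<Sum>x\<in>L. \<pi> x)"
    using assms unfolding p_def prob_dist_on_def by (intro sum_mono2) auto
  then have "p \<le> 1" using assms by (simp add: prob_dist_on_def)
  have "0 \<le> (1 - p) + p * exp t"
    using \<open>0 \<le> p\<close> \<open>p \<le> 1\<close> by simp
  then have "0 \<le> 1 + p * (exp t - 1)"
    by (simp add: algebra_simps)
  then have "(1 + p * (exp t - 1)) ^ n \<le> exp (p * (exp t - 1)) ^ n"
    using exp_ge_add_one_self[of "p * (exp t - 1)"] by (intro power_mono) linarith+
  also have "\<dots> = exp (n * p * (exp t - 1))"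
    by (simp add: exp_of_nat_mult[symmetric] mult.assoc)
  finally show ?thesis using mgf_count[OF assms, of n t Q] unfolding p_def by simp
qed

lemma count_upper_tail:
  fixes b :: real and n :: nat and \<pi> :: "'a \<Rightarrow> real"
  assumes "prob_dist_on L \<pi>"
  shows "prod_prob L \<pi> n (\<lambda>P. b < card {i\<in>{..<n}. Q (P i)})
       \<le> exp (2 * n * (\<Sum>x\<in>{x\<in>L. Q x}. \<pi> x) - b)"
proof -
  define p where "p = (\<Sum>x\<in>{x\<in>L. Q x}. \<pi> x)"
  have "0 \<le> p" using assms unfolding p_def prob_dist_on_def by (auto intro!: sum_nonneg)
  have "prod_prob L \<pi> n (\<lambda>P. b < card {i\<in>{..<n}. Q (P i)})
      \<le> (\<Sum>P\<in>PiE {..<n} (\<lambda>_. L). (\<Prod>i<n. \<pi> (P i)) * exp (card {i\<in>{..<n}. Q (P i)} - b))"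
    by (rule prod_prob_markov[OF assms]) auto
  also have "\<dots> = exp (- b) * (\<Sum>P\<in>PiE {..<n} (\<lambda>_. L). (\<Prod>i<n. \<pi> (P i)) * exp (1 * card {i\<in>{..<n}. Q (P i)}))"
    by (simp add: sum_distrib_left exp_diff exp_minus field_simps)
  also have "\<dots> \<le> exp (- b) * exp (n * p * (exp 1 - 1))"
    using mgf_count_bound[OF assms, of n 1 Q] unfolding p_def by (intro mult_left_mono) auto
  also have "\<dots> \<le> exp (- b) * exp (n * p * 2)"
    using exp_le \<open>0 \<le> p\<close> by (intro mult_left_mono exp_mono) auto
  finally show ?thesis unfolding p_def by (simp add: exp_add[symmetric] mult_ac)
qed

lemma count_lower_tail:
  fixes a :: real and n :: nat and \<pi> :: "'a \<Rightarrow> real"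
  assumes "prob_dist_on L \<pi>"
  shows "prod_prob L \<pi> n (\<lambda>P. card {i\<in>{..<n}. Q (P i)} < a)
       \<le> exp (a - n * (\<Sum>x\<in>{x\<in>L. Q x}. \<pi> x) / 2)"
proof -
  define p where "p = (\<Sum>x\<in>{x\<in>L. Q x}. \<pi> x)"
  have "0 \<le> p" using assms unfolding p_def prob_dist_on_def by (auto intro!: sum_nonneg)
  have "exp (-1::real) \<le> 1/2"
    using exp_ge_add_one_self[of 1] by (simp add: exp_minus field_simps)
  have "prod_prob L \<pi> n (\<lambda>P. card {i\<in>{..<n}. Q (P i)} < a)
      \<le> (\<Sum>P\<in>PiE {..<n} (\<lambda>_. L). (\<Prod>i<n. \<pi> (P i)) * exp (a - card {i\<in>{..<n}. Q (P i)}))"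
    by (rule prod_prob_markov[OF assms]) auto
  also have "\<dots> = exp a * (\<Sum>P\<in>PiE {..<n} (\<lambda>_. L). (\<Prod>i<n. \<pi> (P i)) * exp ((-1) * card {i\<in>{..<n}. Q (P i)}))"
    by (simp add: sum_distrib_left exp_diff exp_minus field_simps)
  also have "\<dots> \<le> exp a * exp (n * p * (exp (-1) - 1))"
    using mgf_count_bound[OF assms, of n "-1" Q] unfolding p_def by (intro mult_left_mono) auto
  also have "\<dots> \<le> exp a * exp (n * p * (-1/2))"
    using \<open>exp (-1) \<le> 1/2\<close> \<open>0 \<le> p\<close> by (intro mult_left_mono exp_mono) auto
  finally show ?thesis unfolding p_def by (simp add: exp_add[symmetric])
qed

lemma card_le_by_fibres:
  assumes "finite B" "f ` A \<subseteq> B" "\<And>b. b \<in> B \<Longrightarrow> card {a\<in>A. f a = b} \<le> k"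
  shows "card A \<le> k * card B"
proof -
  have "A = (\<Union>b\<in>B. {a\<in>A. f a = b})" using assms(2) by auto
  then have "card A \<le> (\<Sum>b\<in>B. card {a\<in>A. f a = b})"
    using card_UN_le[OF assms(1)] by metis
  also have "\<dots> \<le> (\<Sum>b\<in>B. k)" by (rule sum_mono) (rule assms(3))
  finally show ?thesis by (simp add: mult.commute)
qed

text \<open>Folding the integers onto \<open>{0..K}\<close> by reflection at \<open>0\<close> and \<open>K\<close>: it is
  1-Lipschitz, fixes \<open>{0..K}\<close>, and maps \<open>{-K..2K}\<close> into \<open>{0..K}\<close>.\<close>
definition reflect :: "int \<Rightarrow> int \<Rightarrow> int" where
  "reflect K u = K - \<bar>K - \<bar>u\<bar>\<bar>"

lemma reflect_range: "- K \<le> u \<Longrightarrow> u \<le> 2 * K \<Longrightarrow> 0 \<le> reflect K u \<and> reflect K u \<le> K"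
  unfolding reflect_def by linarith

lemma reflect_id: "0 \<le> u \<Longrightarrow> u \<le> K \<Longrightarrow> reflect K u = u"
  unfolding reflect_def by linarith

lemma reflect_lipschitz: "\<bar>reflect K u - reflect K v\<bar> \<le> \<bar>u - v\<bar>"
  unfolding reflect_def by linarith

text \<open>Restricted to a window of \<open>K + 1\<close> consecutive integers the folding is at most 2-to-1:
  the residue modulo \<open>2K\<close> is injective on the window and takes only two values on a fibre.\<close>
lemma reflect_fibre:
  "card {k\<in>{0..K}. reflect (int K) (c + int k) = z} \<le> 2"
proof -
  define F where "F = {k\<in>{0..K}. reflect (int K) (c + int k) = z}"
  define res where "res k = (c + int k) mod (2 * int K)" for k
  have "inj_on res F"
  proof (rule inj_onI)
    fix k l assume "k \<in> F" "l \<in> F" "res k = res l"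
    then have dvd: "2 * int K dvd int k - int l" and "k \<le> K" "l \<le> K"
      unfolding res_def F_def by (auto simp: mod_eq_dvd_iff)
    show "k = l"
    proof (rule ccontr)
      assume "k \<noteq> l"
      then have "\<bar>2 * int K\<bar> \<le> \<bar>int k - int l\<bar>" using dvd by (intro dvd_imp_le_int) auto
      then show False using \<open>k \<le> K\<close> \<open>l \<le> K\<close> \<open>k \<noteq> l\<close> by linarith
    qed
  qed
  moreover have "res ` F \<subseteq> {z mod (2 * int K), (- z) mod (2 * int K)}"
  proof
    fix y assume "y \<in> res ` F"
    then obtain k where "k \<in> F" "y = res k" by auto
    then have "\<bar>K - \<bar>c + int k\<bar>\<bar> = int K - z" unfolding F_def reflect_def by auto
    then have "c + int k \<in> {z, - z, 2 * int K - z, z - 2 * int K}" by auto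
    then show "y \<in> {z mod (2 * int K), (- z) mod (2 * int K)}"
      unfolding \<open>y = res k\<close> res_def by auto
  qed
  ultimately have "card F \<le> card {z mod (2 * int K), (- z) mod (2 * int K)}"
    by (intro card_inj_on_le) auto
  also have "\<dots> \<le> 2" by (simp add: card_insert_le_m1)
  finally show ?thesis unfolding F_def .
qed

text \<open>The coordinate map sending a grid index \<open>k\<close> near \<open>i\<close> to an index near \<open>i'\<close>: translate
  by \<open>i' - i\<close>, then fold back into \<open>{0..K}\<close>.\<close>
definition transfer :: "nat \<Rightarrow> nat \<Rightarrow> nat \<Rightarrow> nat \<Rightarrow> nat" where
  "transfer K i i' k = nat (reflect (int K) (int i' - int i + int k))"

lemma transfer_range: "i \<le> K \<Longrightarrow> i' \<le> K \<Longrightarrow> k \<le> K \<Longrightarrow> transfer K i i' k \<le> K"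
  unfolding transfer_def using reflect_range[of "int K" "int i' - int i + int k"] by auto

lemma transfer_dist:
  assumes "i \<le> K" "i' \<le> K" "k \<le> K"
  shows "\<bar>real (transfer K i i' k) - real i'\<bar> \<le> \<bar>real k - real i\<bar>"
proof -
  have "0 \<le> reflect (int K) (int i' - int i + int k)"
    using reflect_range[of "int K" "int i' - int i + int k"] assms by auto
  moreover have "reflect (int K) (int i') = int i'" using assms by (intro reflect_id) auto
  ultimately have "\<bar>int (transfer K i i' k) - int i'\<bar> \<le> \<bar>int k - int i\<bar>"
    unfolding transfer_def using reflect_lipschitz[of "int K" "int i' - int i + int k" "int i'"] by simp
  then show ?thesis by linarith
qed

lemma transfer_fibre:
  assumes "i \<le> K" "i' \<le> K"
  shows "card {k\<in>{0..K}. transfer K i i' k = z} \<le> 2"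
proof -
  have "{k\<in>{0..K}. transfer K i i' k = z} \<subseteq> {k\<in>{0..K}. reflect (int K) (int i' - int i + int k) = int z}"
  proof safe
    fix k assume "k \<in> {0..K}" "z = transfer K i i' k"
    then show "reflect (int K) (int i' - int i + int k) = int (transfer K i i' k)"
      unfolding transfer_def using assms reflect_range[of "int K" "int i' - int i + int k"] by simp
  qed
  then have "card {k\<in>{0..K}. transfer K i i' k = z}
      \<le> card {k\<in>{0..K}. reflect (int K) (int i' - int i + int k) = int z}"
    by (intro card_mono) auto
  then show ?thesis using reflect_fibre[of K "int i' - int i" "int z"] by linarith
qed

definition grid_size :: "nat \<Rightarrow> real \<Rightarrow> nat" where
  "grid_size n \<epsilon> = nat \<lfloor>sqrt (real n) / \<epsilon>\<rfloor>"

definition grid_pt :: "real \<Rightarrow> nat \<times> nat \<Rightarrow> real \<times> real" where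
  "grid_pt \<epsilon> p = (real (fst p) * \<epsilon>, real (snd p) * \<epsilon>)"

lemma inj_grid_pt: "\<epsilon> > 0 \<Longrightarrow> inj_on (grid_pt \<epsilon>) A"
  by (auto simp: inj_on_def grid_pt_def prod_eq_iff)

lemma lattice_grid:
  assumes "\<epsilon> > 0"
  shows "lattice n \<epsilon> = grid_pt \<epsilon> ` ({0..grid_size n \<epsilon>} \<times> {0..grid_size n \<epsilon>})"
proof -
  have "real i \<le> sqrt (real n) / \<epsilon> \<longleftrightarrow> i \<le> grid_size n \<epsilon>" for i
    unfolding grid_size_def using assms by (simp add: le_nat_iff le_floor_iff)
  then have "lattice n \<epsilon> = {grid_pt \<epsilon> (i, j) | i j. i \<le> grid_size n \<epsilon> \<and> j \<le> grid_size n \<epsilon>}"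
    unfolding lattice_def grid_pt_def by simp
  then show ?thesis by fastforce
qed

lemma finite_lattice: "\<epsilon> > 0 \<Longrightarrow> finite (lattice n \<epsilon>)"
  by (simp add: lattice_grid)

lemma card_lattice: "\<epsilon> > 0 \<Longrightarrow> card (lattice n \<epsilon>) = (grid_size n \<epsilon> + 1)\<^sup>2"
  by (simp add: lattice_grid card_image inj_grid_pt card_cartesian_product power2_eq_square)

lemma edist_scaled_mono:
  assumes "\<bar>a' - c'\<bar> \<le> \<bar>a - c\<bar>" "\<bar>b' - d'\<bar> \<le> \<bar>b - d\<bar>"
  shows "edist (a' * e, b' * e) (c' * e, d' * e) \<le> edist (a * e, b * e) (c * e, d * e)"
proof -
  have "(a' - c')\<^sup>2 \<le> (a - c)\<^sup>2" "(b' - d')\<^sup>2 \<le> (b - d)\<^sup>2"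
    using assms by (metis abs_ge_zero power2_abs power_mono)+
  then have "e\<^sup>2 * ((a' - c')\<^sup>2 + (b' - d')\<^sup>2) \<le> e\<^sup>2 * ((a - c)\<^sup>2 + (b - d)\<^sup>2)"
    by (intro mult_left_mono) auto
  then show ?thesis
    unfolding edist_def by (simp add: power2_eq_square algebra_simps)
qed

lemma card_Gamma_grid:
  assumes "\<epsilon> > 0"
  shows "card (Gamma n r \<epsilon> (grid_pt \<epsilon> p)) =
     card {q \<in> {0..grid_size n \<epsilon>} \<times> {0..grid_size n \<epsilon>}. edist (grid_pt \<epsilon> p) (grid_pt \<epsilon> q) \<le> r}"
proof -
  have "Gamma n r \<epsilon> (grid_pt \<epsilon> p) = grid_pt \<epsilon> `
     {q \<in> {0..grid_size n \<epsilon>} \<times> {0..grid_size n \<epsilon>}. edist (grid_pt \<epsilon> p) (grid_pt \<epsilon> q) \<le> r}"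
    unfolding Gamma_def lattice_grid[OF assms] by auto
  then show ?thesis by (simp add: card_image inj_grid_pt[OF assms])
qed

text \<open>Key geometric fact: all neighbourhood sizes agree up to the factor 4.  The map that
  transfers each coordinate from around \<open>x\<close> to around \<open>y\<close> (folding at the border of the
  square) does not increase distances to the centre and is at most 4-to-1.\<close>
lemma Gamma_ratio:
  assumes e: "\<epsilon> > 0" and x: "x \<in> lattice n \<epsilon>" and y: "y \<in> lattice n \<epsilon>"
  shows "card (Gamma n r \<epsilon> x) \<le> 4 * card (Gamma n r \<epsilon> y)"
proof -
  define K where "K = grid_size n \<epsilon>"
  define S where "S p = {q \<in> {0..K} \<times> {0..K}. edist (grid_pt \<epsilon> p) (grid_pt \<epsilon> q) \<le> r}" for p
  obtain i j where ij: "i \<le> K" "j \<le> K" "x = grid_pt \<epsilon> (i, j)"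
    using x unfolding lattice_grid[OF e] K_def by auto
  obtain i' j' where ij': "i' \<le> K" "j' \<le> K" "y = grid_pt \<epsilon> (i', j')"
    using y unfolding lattice_grid[OF e] K_def by auto
  define \<psi> where "\<psi> q = (transfer K i i' (fst q), transfer K j j' (snd q))" for q
  have "\<psi> ` S (i, j) \<subseteq> S (i', j')"
  proof (rule image_subsetI)
    fix q assume "q \<in> S (i, j)"
    obtain k l where q: "q = (k, l)" by fastforce
    from \<open>q \<in> S (i, j)\<close> have kl: "k \<le> K" "l \<le> K" and d: "edist (grid_pt \<epsilon> (i, j)) (grid_pt \<epsilon> (k, l)) \<le> r"
      unfolding S_def q by auto
    have "\<bar>real i' - real (transfer K i i' k)\<bar> \<le> \<bar>real i - real k\<bar>"
      "\<bar>real j' - real (transfer K j j' l)\<bar> \<le> \<bar>real j - real l\<bar>"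
      using transfer_dist[OF ij(1) ij'(1) kl(1)] transfer_dist[OF ij(2) ij'(2) kl(2)] by linarith+
    then have "edist (grid_pt \<epsilon> (i', j')) (grid_pt \<epsilon> (\<psi> (k, l)))
        \<le> edist (grid_pt \<epsilon> (i, j)) (grid_pt \<epsilon> (k, l))"
      unfolding \<psi>_def grid_pt_def fst_conv snd_conv by (rule edist_scaled_mono)
    then have "edist (grid_pt \<epsilon> (i', j')) (grid_pt \<epsilon> (\<psi> (k, l))) \<le> r"
      using d by linarith
    then show "\<psi> q \<in> S (i', j')" unfolding q
      unfolding S_def \<psi>_def using transfer_range ij ij' kl by simp
  qed
  moreover have "card {q \<in> S (i, j). \<psi> q = (u, v)} \<le> 4" for u v
  proof -
    have "{q \<in> S (i, j). \<psi> q = (u, v)}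
        \<subseteq> {k\<in>{0..K}. transfer K i i' k = u} \<times> {l\<in>{0..K}. transfer K j j' l = v}"
      unfolding S_def \<psi>_def by auto
    then have "card {q \<in> S (i, j). \<psi> q = (u, v)}
        \<le> card ({k\<in>{0..K}. transfer K i i' k = u} \<times> {l\<in>{0..K}. transfer K j j' l = v})"
      by (intro card_mono) auto
    also have "\<dots> = card {k\<in>{0..K}. transfer K i i' k = u} * card {l\<in>{0..K}. transfer K j j' l = v}"
      by (rule card_cartesian_product)
    also have "\<dots> \<le> 2 * 2"
      using transfer_fibre[OF ij(1) ij'(1)] transfer_fibre[OF ij(2) ij'(2)] by (intro mult_le_mono)
    finally show ?thesis by simp
  qed
  ultimately have "card (S (i, j)) \<le> 4 * card (S (i', j'))"
    by (intro card_le_by_fibres) (auto simp: S_def)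
  then show ?thesis
    unfolding ij(3) ij'(3) card_Gamma_grid[OF e] S_def K_def .
qed

text \<open>If all weights agree up to the factor \<open>\<rho>\<close>, the normalised weight of a subset \<open>C\<close> is within
  the factor \<open>\<rho>\<close> of its share \<open>|C| / |L|\<close> of the points (double counting over \<open>C \<times> L\<close>).\<close>
lemma mass_near_uniform:
  fixes w :: "'a \<Rightarrow> real" and \<rho> :: real
  assumes "finite L" "C \<subseteq> L" and ratio: "\<And>x y. x \<in> L \<Longrightarrow> y \<in> L \<Longrightarrow> w x \<le> \<rho> * w y"
  shows "card C * sum w L \<le> \<rho> * card L * sum w C"
    and "card L * sum w C \<le> \<rho> * card C * sum w L"
proof -
  have "card C * sum w L = (\<Sum>x\<in>C. \<Sum>y\<in>L. w y)" by simp
  also have "\<dots> \<le> (\<Sum>x\<in>C. \<Sum>y\<in>L. \<rho> * w x)"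
    using assms by (intro sum_mono) auto
  also have "\<dots> = \<rho> * card L * sum w C"
    by (simp add: sum_distrib_left sum_distrib_right mult_ac)
  finally show "card C * sum w L \<le> \<rho> * card L * sum w C" .
  have "card L * sum w C = (\<Sum>x\<in>C. \<Sum>y\<in>L. w x)"
    by (simp add: sum_distrib_left sum_distrib_right mult.commute)
  also have "\<dots> \<le> (\<Sum>x\<in>C. \<Sum>y\<in>L. \<rho> * w y)"
    using assms by (intro sum_mono) auto
  also have "\<dots> = \<rho> * card C * sum w L"
    by (simp add: sum_distrib_left sum_distrib_right mult_ac)
  finally show "card L * sum w C \<le> \<rho> * card C * sum w L" .
qed

text \<open>Each neighbourhood contains its centre, so the weights \<open>|\<Gamma>(x)|\<close> are positive and \<open>\<pi>\<close>
  is a probability distribution on the lattice.\<close>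
lemma card_Gamma_pos:
  assumes "\<epsilon> > 0" "r \<ge> 0" "x \<in> lattice n \<epsilon>"
  shows "0 < card (Gamma n r \<epsilon> x)"
proof -
  have "x \<in> Gamma n r \<epsilon> x" using assms by (simp add: Gamma_def edist_def)
  moreover have "finite (Gamma n r \<epsilon> x)" using assms by (simp add: Gamma_def finite_lattice)
  ultimately show ?thesis by (simp add: card_gt_0_iff) blast
qed

lemma total_weight_pos:
  assumes "\<epsilon> > 0" "r \<ge> 0"
  shows "0 < (\<Sum>y\<in>lattice n \<epsilon>. real (card (Gamma n r \<epsilon> y)))"
  using assms card_Gamma_pos[OF assms] finite_lattice[OF assms(1)]
  by (intro sum_pos) (auto simp: lattice_grid)

lemma stat_dist_prob:
  assumes "\<epsilon> > 0" "r \<ge> 0"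
  shows "prob_dist_on (lattice n \<epsilon>) (stat_dist n r \<epsilon>)"
  using total_weight_pos[OF assms, of n]
  unfolding prob_dist_on_def stat_dist_def
  by (simp add: finite_lattice[OF assms(1)] sum_divide_distrib[symmetric])

lemma stat_dist_mass:
  assumes "\<epsilon> > 0" "r \<ge> 0" "C \<subseteq> lattice n \<epsilon>"
  shows "card C / (4 * card (lattice n \<epsilon>)) \<le> (\<Sum>x\<in>C. stat_dist n r \<epsilon> x)"
    and "(\<Sum>x\<in>C. stat_dist n r \<epsilon> x) \<le> 4 * card C / card (lattice n \<epsilon>)"
proof -
  define L where "L = lattice n \<epsilon>"
  define w where "w x = real (card (Gamma n r \<epsilon> x))" for x
  have fin: "finite L" unfolding L_def using assms by (simp add: finite_lattice)
  have ratio: "w x \<le> 4 * w y" if "x \<in> L" "y \<in> L" for x y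
    using Gamma_ratio[OF assms(1)] that unfolding L_def w_def by (metis of_nat_le_iff of_nat_mult of_nat_numeral)
  have Lw: "0 < sum w L"
    using total_weight_pos[OF assms(1,2)] unfolding L_def w_def .
  have L: "0 < card L" using fin assms(1) unfolding L_def by (simp add: card_lattice)
  have C: "C \<subseteq> L" using assms(3) unfolding L_def .
  have \<pi>: "(\<Sum>x\<in>C. stat_dist n r \<epsilon> x) = sum w C / sum w L"
    unfolding stat_dist_def w_def L_def by (simp add: sum_divide_distrib)
  have "card C / (4 * card L) \<le> sum w C / sum w L"
    using mass_near_uniform(1)[where w=w and \<rho>=4, OF fin C ratio] Lw L by (simp add: field_simps)
  then show "card C / (4 * card (lattice n \<epsilon>)) \<le> (\<Sum>x\<in>C. stat_dist n r \<epsilon> x)"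
    unfolding \<pi> L_def .
  have "sum w C / sum w L \<le> 4 * card C / card L"
    using mass_near_uniform(2)[where w=w and \<rho>=4, OF fin C ratio] Lw L by (simp add: field_simps)
  then show "(\<Sum>x\<in>C. stat_dist n r \<epsilon> x) \<le> 4 * card C / card (lattice n \<epsilon>)"
    unfolding \<pi> L_def .
qed

lemma card_nats_closed_interval:
  fixes u h :: real
  assumes "0 \<le> u" "0 \<le> h"
  shows "real (card {k::nat. u \<le> k \<and> k \<le> u + h}) \<le> h + 1"
proof -
  have "{k::nat. u \<le> k \<and> k \<le> u + h} \<subseteq> {nat \<lceil>u\<rceil> .. nat \<lfloor>u + h\<rfloor>}"
    by (auto simp: nat_le_iff le_nat_iff ceiling_le_iff le_floor_iff)
  then have "card {k::nat. u \<le> k \<and> k \<le> u + h} \<le> Suc (nat \<lfloor>u + h\<rfloor>) - nat \<lceil>u\<rceil>"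
    using card_mono[of "{nat \<lceil>u\<rceil> .. nat \<lfloor>u + h\<rfloor>}"] by fastforce
  moreover have "real (Suc (nat \<lfloor>u + h\<rfloor>) - nat \<lceil>u\<rceil>) \<le> h + 1"
    using assms floor_le_ceiling[of u] by (simp add: of_nat_diff) linarith
  ultimately show ?thesis by (meson of_nat_le_iff order_trans)
qed

lemma card_nats_open_interval:
  fixes u h :: real
  assumes "0 \<le> u" "0 \<le> h"
  shows "h - 1 \<le> real (card {k::nat. u < k \<and> k < u + h})"
proof -
  have "{Suc (nat \<lfloor>u\<rfloor>) ..< nat \<lceil>u + h\<rceil>} \<subseteq> {k::nat. u < k \<and> k < u + h}"
  proof
    fix k assume "k \<in> {Suc (nat \<lfloor>u\<rfloor>) ..< nat \<lceil>u + h\<rceil>}"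
    then have "\<lfloor>u\<rfloor> < int k" "int k < \<lceil>u + h\<rceil>" using assms by auto
    then show "k \<in> {k::nat. u < k \<and> k < u + h}" by (simp add: floor_less_iff less_ceiling_iff)
  qed
  moreover have "finite {k::nat. u < k \<and> k < u + h}"
    by (rule finite_subset[of _ "{..nat \<lfloor>u + h\<rfloor>}"]) (auto intro: le_nat_floor)
  ultimately have "card {Suc (nat \<lfloor>u\<rfloor>) ..< nat \<lceil>u + h\<rceil>} \<le> card {k::nat. u < k \<and> k < u + h}"
    by (intro card_mono)
  then have "nat \<lceil>u + h\<rceil> - Suc (nat \<lfloor>u\<rfloor>) \<le> card {k::nat. u < k \<and> k < u + h}"
    by simp
  moreover have "h - 1 \<le> real (nat \<lceil>u + h\<rceil>) - real (Suc (nat \<lfloor>u\<rfloor>))"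
    using assms by simp linarith
  moreover have "real (nat \<lceil>u + h\<rceil>) - real (Suc (nat \<lfloor>u\<rfloor>)) \<le> real (nat \<lceil>u + h\<rceil> - Suc (nat \<lfloor>u\<rfloor>))"
    by (cases "Suc (nat \<lfloor>u\<rfloor>) \<le> nat \<lceil>u + h\<rceil>") (simp_all add: of_nat_diff)
  ultimately show ?thesis by linarith
qed

lemma mem_cell_set:
  "x \<in> cell_set n m (a, b) \<longleftrightarrow>
    real a * (sqrt n / m) \<le> fst x \<and> fst x \<le> (real a + 1) * (sqrt n / m) \<and>
    real b * (sqrt n / m) \<le> snd x \<and> snd x \<le> (real b + 1) * (sqrt n / m)"
  unfolding cell_set_def Let_def by (cases x) (simp add: ac_simps)

lemma slab_index_unique:
  fixes s t :: real
  assumes "0 < s" "real a' * s \<le> t" "t \<le> (real a' + 1) * s" "real a * s < t" "t < (real a + 1) * s"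
  shows "a' = a"
proof -
  have "real a' * s < (real a + 1) * s" "real a * s < (real a' + 1) * s" using assms by linarith+
  then have "real a' < real a + 1" "real a < real a' + 1" using \<open>0 < s\<close> by simp_all
  then show ?thesis by linarith
qed

text \<open>Upper bound on the number of lattice points assigned to a cell of side \<open>s = \<surd>n / m\<close>:
  they lie in the closed cell, whose index ranges are intervals of length \<open>s / \<epsilon>\<close>.\<close>
lemma card_cell_points_upper:
  assumes e: "\<epsilon> > 0" and valid: "valid_assignment n \<epsilon> m cell"
  shows "card {x\<in>lattice n \<epsilon>. cell x = (a, b)} \<le> (sqrt n / m / \<epsilon> + 1)\<^sup>2"
proof -
  define s where "s = sqrt n / m"
  define J where "J c = {k::nat. real c * s / \<epsilon> \<le> k \<and> k \<le> real c * s / \<epsilon> + s / \<epsilon>}" for c :: nat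
  have s0: "0 \<le> s" unfolding s_def by simp
  have "{x\<in>lattice n \<epsilon>. cell x = (a, b)} \<subseteq> grid_pt \<epsilon> ` (J a \<times> J b)"
  proof
    fix x assume x: "x \<in> {x\<in>lattice n \<epsilon>. cell x = (a, b)}"
    then obtain k l where kl: "x = grid_pt \<epsilon> (k, l)" unfolding lattice_grid[OF e] by auto
    have "x \<in> cell_set n m (a, b)" using valid x unfolding valid_assignment_def by auto
    then have "k \<in> J a" "l \<in> J b"
      unfolding J_def mem_cell_set kl grid_pt_def s_def[symmetric] using e
      by (auto simp: field_simps)
    then show "x \<in> grid_pt \<epsilon> ` (J a \<times> J b)" using kl by auto
  qed
  moreover have finJ: "finite (J c)" for c
    by (rule finite_subset[of _ "{..nat \<lfloor>real c * s / \<epsilon> + s / \<epsilon>\<rfloor>}"]) (auto simp: J_def intro: le_nat_floor)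
  ultimately have "card {x\<in>lattice n \<epsilon>. cell x = (a, b)} \<le> card (grid_pt \<epsilon> ` (J a \<times> J b))"
    by (intro card_mono) auto
  also have "\<dots> \<le> card (J a \<times> J b)" by (rule card_image_le) (simp add: finJ)
  finally have "card {x\<in>lattice n \<epsilon>. cell x = (a, b)} \<le> card (J a \<times> J b)" .
  then have "real (card {x\<in>lattice n \<epsilon>. cell x = (a, b)}) \<le> real (card (J a)) * real (card (J b))"
    by (simp add: card_cartesian_product flip: of_nat_mult)
  also have "\<dots> \<le> (s / \<epsilon> + 1) * (s / \<epsilon> + 1)"
    using card_nats_closed_interval[of "real _ * s / \<epsilon>" "s / \<epsilon>"] s0 e
    unfolding J_def by (intro mult_mono) auto
  finally show ?thesis unfolding s_def by (simp add: power2_eq_square)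
qed

text \<open>Lower bound: every lattice point strictly inside the cell is assigned to it.\<close>
lemma card_cell_points_lower:
  assumes e: "\<epsilon> > 0" and valid: "valid_assignment n \<epsilon> m cell" and ab: "a < m" "b < m"
    and big: "1 \<le> sqrt n / m / \<epsilon>"
  shows "(sqrt n / m / \<epsilon> - 1)\<^sup>2 \<le> card {x\<in>lattice n \<epsilon>. cell x = (a, b)}"
proof -
  define s where "s = sqrt n / m"
  define J where "J c = {k::nat. real c * s / \<epsilon> < k \<and> k < real c * s / \<epsilon> + s / \<epsilon>}" for c :: nat
  have "1 \<le> s / \<epsilon>" using big unfolding s_def .
  then have "\<epsilon> \<le> s" using e by (simp add: le_divide_eq)
  then have s0: "0 < s" using e by linarith
  have ms: "real m * s = sqrt n" unfolding s_def using ab by simp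
  have inside: "real c * s < real k * \<epsilon>" "real k * \<epsilon> < (real c + 1) * s" if "k \<in> J c" for c k
    using that e unfolding J_def by (auto simp: field_simps)
  have sub: "grid_pt \<epsilon> ` (J a \<times> J b) \<subseteq> {x\<in>lattice n \<epsilon>. cell x = (a, b)}"
  proof (rule image_subsetI)
    fix q assume "q \<in> J a \<times> J b"
    then obtain k l where q: "q = (k, l)" and kl: "k \<in> J a" "l \<in> J b" by blast
    have "real a + 1 \<le> real m" "real b + 1 \<le> real m" using ab by linarith+
    then have "(real a + 1) * s \<le> sqrt n" "(real b + 1) * s \<le> sqrt n"
      using s0 ms by (metis less_imp_le mult_right_mono)+
    then have "real k \<le> sqrt n / \<epsilon>" "real l \<le> sqrt n / \<epsilon>"
      using inside[OF kl(1)] inside[OF kl(2)] e by (simp_all add: field_simps)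
    then have L: "grid_pt \<epsilon> (k, l) \<in> lattice n \<epsilon>"
      unfolding lattice_def grid_pt_def by auto
    obtain a' b' where c: "cell (grid_pt \<epsilon> (k, l)) = (a', b')" by fastforce
    then have "grid_pt \<epsilon> (k, l) \<in> cell_set n m (a', b')"
      using valid L unfolding valid_assignment_def by metis
    then have "a' = a" "b' = b"
      using slab_index_unique[OF s0 _ _ inside(1,2)[OF kl(1)]] slab_index_unique[OF s0 _ _ inside(1,2)[OF kl(2)]]
      unfolding mem_cell_set grid_pt_def s_def[symmetric] by auto
    then show "grid_pt \<epsilon> q \<in> {x\<in>lattice n \<epsilon>. cell x = (a, b)}"
      using L c q by simp
  qed
  have "card (J a \<times> J b) = card (grid_pt \<epsilon> ` (J a \<times> J b))"
    by (rule card_image[symmetric, OF inj_grid_pt[OF e]])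
  also have "\<dots> \<le> card {x\<in>lattice n \<epsilon>. cell x = (a, b)}"
    using sub finite_lattice[OF e] by (intro card_mono) auto
  finally have "card (J a \<times> J b) \<le> card {x\<in>lattice n \<epsilon>. cell x = (a, b)}" .
  then have "real (card (J a)) * real (card (J b)) \<le> card {x\<in>lattice n \<epsilon>. cell x = (a, b)}"
    by (simp add: card_cartesian_product flip: of_nat_mult)
  moreover have "(s / \<epsilon> - 1) * (s / \<epsilon> - 1) \<le> real (card (J a)) * real (card (J b))"
    using card_nats_open_interval[of "real _ * s / \<epsilon>" "s / \<epsilon>"] s0 e big
    unfolding J_def s_def[symmetric] by (intro mult_mono) auto
  ultimately show ?thesis unfolding s_def by (simp add: power2_eq_square)
qed

lemma num_cells_bounds:
  fixes R :: real
  assumes "0 < R" "R \<le> sqrt n"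
  shows "2 * sqrt n \<le> R * num_cells n R" "R * num_cells n R \<le> 4 * sqrt n"
proof -
  define x where "x = sqrt (5 * real n) / R"
  have "0 \<le> x" unfolding x_def using assms by simp
  then have m: "x \<le> num_cells n R" "num_cells n R < x + 1"
    unfolding num_cells_def x_def[symmetric] by linarith+
  have "sqrt (5 * real n) = sqrt 5 * sqrt n" by (simp add: real_sqrt_mult)
  moreover have "2 \<le> sqrt (5::real)" "sqrt (5::real) \<le> 3"
    by (simp_all add: real_le_rsqrt real_le_lsqrt)
  ultimately have "2 * sqrt n \<le> R * x" "R * x \<le> 3 * sqrt n"
    unfolding x_def using assms by (simp_all add: mult_right_mono)
  moreover have "R * x \<le> R * num_cells n R"
    using m assms by (intro mult_left_mono) auto
  moreover have "R * num_cells n R \<le> R * x + R"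
    using mult_left_mono[of _ "x + 1" R] m assms by (simp add: distrib_left)
  ultimately show "2 * sqrt n \<le> R * num_cells n R" "R * num_cells n R \<le> 4 * sqrt n"
    using assms by linarith+
qed

lemma card_lattice_bounds:
  assumes "\<epsilon> > 0" "1 \<le> sqrt n / \<epsilon>"
  shows "(sqrt n / \<epsilon>)\<^sup>2 \<le> card (lattice n \<epsilon>)" "card (lattice n \<epsilon>) \<le> 4 * (sqrt n / \<epsilon>)\<^sup>2"
proof -
  define Y where "Y = sqrt n / \<epsilon>"
  have K: "Y \<le> real (grid_size n \<epsilon>) + 1" "real (grid_size n \<epsilon>) + 1 \<le> 2 * Y"
    using assms unfolding grid_size_def Y_def[symmetric] by linarith+
  have card: "real (card (lattice n \<epsilon>)) = (real (grid_size n \<epsilon>) + 1)\<^sup>2"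
    using card_lattice[OF assms(1)] by simp
  show "(sqrt n / \<epsilon>)\<^sup>2 \<le> card (lattice n \<epsilon>)"
    unfolding card Y_def[symmetric] using K assms by (intro power_mono) (auto simp: Y_def)
  have "(real (grid_size n \<epsilon>) + 1)\<^sup>2 \<le> (2 * Y)\<^sup>2" using K by (intro power_mono) auto
  also have "\<dots> = 4 * Y\<^sup>2" by (simp add: power_mult_distrib)
  finally show "card (lattice n \<epsilon>) \<le> 4 * (sqrt n / \<epsilon>)\<^sup>2"
    unfolding card Y_def .
qed

text \<open>Each cell carries stationary mass \<open>\<Theta>(R\<^sup>2/n)\<close>: it holds \<open>\<Theta>((side/\<epsilon>)\<^sup>2)\<close> of the
  \<open>\<Theta>(n/\<epsilon>\<^sup>2)\<close> lattice points, and \<open>\<pi>\<close> is uniform up to the factor 4.\<close>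
lemma cell_mass:
  assumes r: "r \<ge> 0" and e: "0 < \<epsilon>" "\<epsilon> \<le> 1" and R: "8 \<le> R" "R \<le> sqrt n"
    and valid: "valid_assignment n \<epsilon> (num_cells n R) cell"
    and ab: "a < num_cells n R" "b < num_cells n R"
  defines "p \<equiv> (\<Sum>x\<in>{x\<in>lattice n \<epsilon>. cell x = (a, b)}. stat_dist n r \<epsilon> x)"
  shows "R\<^sup>2 / 1024 \<le> n * p" "n * p \<le> 4 * R\<^sup>2"
proof -
  define m where "m = num_cells n R"
  define s where "s = sqrt n / m"
  define X where "X = s / \<epsilon>"
  define Y where "Y = sqrt n / \<epsilon>"
  define C where "C = {x\<in>lattice n \<epsilon>. cell x = (a, b)}"
  have n: "0 < real n" using R by (cases n) auto
  have "0 < m" using ab unfolding m_def by linarith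
  then have side: "R / 4 \<le> s" "s \<le> R / 2"
    using num_cells_bounds[of R n] R unfolding s_def m_def by (simp_all add: field_simps)
  have "s * \<epsilon> \<le> s" "sqrt n * \<epsilon> \<le> sqrt n"
    using e side R by (simp_all add: mult_right_le_one_le)
  then have "s \<le> X" "sqrt n \<le> Y"
    using e unfolding X_def Y_def by (simp_all add: le_divide_eq)
  then have X: "2 \<le> X" and Y: "1 \<le> Y" using side R by linarith+
  have "X\<^sup>2 / 4 = (X / 2)\<^sup>2" by (simp add: power_divide)
  also have "\<dots> \<le> (X - 1)\<^sup>2" using X by (intro power_mono) auto
  also have "\<dots> \<le> card C"
    using card_cell_points_lower[OF e(1) valid ab] X unfolding C_def X_def s_def m_def by simp
  finally have C_low: "X\<^sup>2 / 4 \<le> card C" .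
  have "card C \<le> (X + 1)\<^sup>2"
    using card_cell_points_upper[OF e(1) valid, of a b] unfolding C_def X_def s_def m_def .
  also have "\<dots> \<le> (2 * X)\<^sup>2" using X by (intro power_mono) auto
  also have "\<dots> = 4 * X\<^sup>2" by (simp add: power_mult_distrib)
  finally have C_up: "card C \<le> 4 * X\<^sup>2" .
  have L: "Y\<^sup>2 \<le> card (lattice n \<epsilon>)" "card (lattice n \<epsilon>) \<le> 4 * Y\<^sup>2"
    using card_lattice_bounds[OF e(1)] Y unfolding Y_def by auto
  have "1 \<le> Y\<^sup>2" using Y by (simp add: one_le_power)
  then have L_pos: "0 < real (card (lattice n \<epsilon>))" using L by linarith
  have XY: "X\<^sup>2 / Y\<^sup>2 = s\<^sup>2 / n"
    unfolding X_def Y_def using e n by (simp add: power_divide)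
  have "C \<subseteq> lattice n \<epsilon>" unfolding C_def by auto
  moreover have "p = (\<Sum>x\<in>C. stat_dist n r \<epsilon> x)" unfolding p_def C_def ..
  ultimately have mass: "card C / (4 * card (lattice n \<epsilon>)) \<le> p" "p \<le> 4 * card C / card (lattice n \<epsilon>)"
    using stat_dist_mass[OF e(1) r] by auto
  have "(X\<^sup>2 / 4) / (4 * (4 * Y\<^sup>2)) \<le> card C / (4 * card (lattice n \<epsilon>))"
    using C_low L L_pos by (intro frac_le) auto
  then have "(X\<^sup>2 / Y\<^sup>2) / 64 \<le> p" using mass(1) by (simp add: field_simps)
  then have "s\<^sup>2 / 64 \<le> n * p" unfolding XY using n by (simp add: field_simps)
  moreover have "(R / 4)\<^sup>2 \<le> s\<^sup>2" using side R by (intro power_mono) auto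
  ultimately show "R\<^sup>2 / 1024 \<le> n * p" by (simp add: power_divide)
  have "4 * card C / card (lattice n \<epsilon>) \<le> 4 * (4 * X\<^sup>2) / Y\<^sup>2"
    using C_up L \<open>1 \<le> Y\<^sup>2\<close> by (intro frac_le) auto
  then have "p \<le> 16 * (X\<^sup>2 / Y\<^sup>2)" using mass(2) by (simp add: field_simps)
  then have "n * p \<le> 16 * s\<^sup>2" unfolding XY using n by (simp add: field_simps)
  moreover have "s\<^sup>2 \<le> (R / 2)\<^sup>2" using side R by (intro power_mono) auto
  ultimately show "n * p \<le> 4 * R\<^sup>2" by (simp add: power_divide)
qed

lemma count_concentration:
  fixes \<pi> :: "'a \<Rightarrow> real" and R :: real
  assumes \<pi>: "prob_dist_on L \<pi>"
    and mean: "R\<^sup>2 / 1024 \<le> n * (\<Sum>x\<in>{x\<in>L. Q x}. \<pi> x)" "n * (\<Sum>x\<in>{x\<in>L. Q x}. \<pi> x) \<le> 4 * R\<^sup>2"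
  shows "prod_prob L \<pi> n (\<lambda>P. \<not> (R\<^sup>2 / 4096 \<le> card {i\<in>{..<n}. Q (P i)} \<and>
                                   card {i\<in>{..<n}. Q (P i)} \<le> 4096 * R\<^sup>2))
       \<le> 2 * exp (- (R\<^sup>2 / 4096))"
proof -
  let ?N = "\<lambda>P. real (card {i\<in>{..<n}. Q (P i)})"
  let ?np = "n * (\<Sum>x\<in>{x\<in>L. Q x}. \<pi> x)"
  have "prod_prob L \<pi> n (\<lambda>P. \<not> (R\<^sup>2 / 4096 \<le> ?N P \<and> ?N P \<le> 4096 * R\<^sup>2))
      \<le> prod_prob L \<pi> n (\<lambda>P. ?N P < R\<^sup>2 / 4096 \<or> 4096 * R\<^sup>2 < ?N P)"
    by (rule prod_prob_mono[OF \<pi>]) auto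
  also have "\<dots> \<le> prod_prob L \<pi> n (\<lambda>P. ?N P < R\<^sup>2 / 4096) + prod_prob L \<pi> n (\<lambda>P. 4096 * R\<^sup>2 < ?N P)"
    by (rule prod_prob_disj[OF \<pi>])
  also have "\<dots> \<le> exp (R\<^sup>2 / 4096 - ?np / 2) + exp (2 * ?np - 4096 * R\<^sup>2)"
    using count_lower_tail[OF \<pi>, where a="R\<^sup>2 / 4096" and n=n and Q=Q]
      count_upper_tail[OF \<pi>, where b="4096 * R\<^sup>2" and n=n and Q=Q]
    by (intro add_mono) (simp_all add: mult.assoc)
  also have "\<dots> \<le> exp (- (R\<^sup>2 / 4096)) + exp (- (R\<^sup>2 / 4096))"
    using mean by (intro add_mono) auto
  finally show ?thesis by simp
qed

lemma radius_large:
  fixes R :: real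
  assumes n: "3 \<le> n" and R: "128 * sqrt (ln n) \<le> R"
  shows "128 \<le> R" "exp (- (R\<^sup>2 / 4096)) \<le> 1 / real n ^ 4"
proof -
  have "exp 1 \<le> real n" using exp_le n by linarith
  then have ln_n: "1 \<le> ln n" using n by (subst ln_ge_iff) auto
  then have "1 \<le> sqrt (ln n)" by simp
  then show "128 \<le> R" using R by linarith
  have "16384 * ln n \<le> R\<^sup>2"
    using power_mono[OF R, of 2] ln_n by (simp add: power_mult_distrib)
  then have "exp (- (R\<^sup>2 / 4096)) \<le> exp (- (4 * ln n))" by simp
  also have "\<dots> = 1 / real n ^ 4"
    using exp_of_nat_mult[of 4 "ln n"] n by (simp add: exp_minus inverse_eq_divide)
  finally show "exp (- (R\<^sup>2 / 4096)) \<le> 1 / real n ^ 4" .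
qed

lemma card_cells_le:
  fixes R :: real
  assumes "4 \<le> R" "R \<le> sqrt n"
  shows "real (card ({..<num_cells n R} \<times> {..<num_cells n R})) \<le> n"
proof -
  have "4 * real (num_cells n R) \<le> R * num_cells n R"
    using mult_right_mono[OF assms(1)] by simp
  also have "\<dots> \<le> 4 * sqrt n" using num_cells_bounds[of R n] assms by simp
  finally have "real (num_cells n R) * real (num_cells n R) \<le> sqrt n * sqrt n"
    by (intro mult_mono) auto
  then show ?thesis by (simp add: card_cartesian_product)
qed

lemma config_prob_eq: "config_prob n r \<epsilon> E = prod_prob (lattice n \<epsilon>) (stat_dist n r \<epsilon>) n E"
  unfolding config_prob_def prod_prob_def ..

text \<open>The theorem for fixed parameters, with \<open>c = 128\<close> and \<open>\<lambda> = 4096\<close>: a union bound over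
  the at most \<open>n\<close> cells, each unbalanced with probability at most \<open>2 exp(-R\<^sup>2/4096) \<le> 2/n\<^sup>4\<close>.\<close>
lemma cells_balanced_whp:
  fixes r \<epsilon> R :: real
  assumes n: "3 \<le> n" and r: "r \<ge> 0" and e: "0 < \<epsilon>" "\<epsilon> \<le> 1"
    and R: "128 * sqrt (ln n) \<le> R" "R \<le> sqrt n"
    and valid: "valid_assignment n \<epsilon> (num_cells n R) cell"
  shows "1 - 1 / (real n)\<^sup>2 \<le> config_prob n r \<epsilon> (\<lambda>P. \<forall>a<num_cells n R. \<forall>b<num_cells n R.
           R\<^sup>2 / 4096 \<le> real (cell_count n cell P (a, b)) \<and>
           real (cell_count n cell P (a, b)) \<le> 4096 * R\<^sup>2)"
proof -
  define m where "m = num_cells n R"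
  define L where "L = lattice n \<epsilon>"
  define \<pi> where "\<pi> = stat_dist n r \<epsilon>"
  define bad where "bad ab P \<longleftrightarrow> \<not> (R\<^sup>2 / 4096 \<le> real (cell_count n cell P ab) \<and>
                                    real (cell_count n cell P ab) \<le> 4096 * R\<^sup>2)" for ab P
  have prob: "prob_dist_on L \<pi>" unfolding L_def \<pi>_def by (rule stat_dist_prob[OF e(1) r])
  note R_large = radius_large[OF n R(1)]
  have each: "prod_prob L \<pi> n (bad ab) \<le> 2 / real n ^ 4" if cell: "ab \<in> {..<m} \<times> {..<m}" for ab
  proof -
    obtain a b where ab: "ab = (a, b)" "a < m" "b < m" using cell by (cases ab) auto
    have "R\<^sup>2 / 1024 \<le> n * (\<Sum>x\<in>{x\<in>L. cell x = (a, b)}. \<pi> x)"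
         "n * (\<Sum>x\<in>{x\<in>L. cell x = (a, b)}. \<pi> x) \<le> 4 * R\<^sup>2"
      using cell_mass[OF r e _ R(2) valid, of a b] ab R_large(1) unfolding m_def L_def \<pi>_def by auto
    then have "prod_prob L \<pi> n (bad ab) \<le> 2 * exp (- (R\<^sup>2 / 4096))"
      unfolding bad_def cell_count_def ab(1) by (rule count_concentration[OF prob])
    then show ?thesis using R_large(2) by linarith
  qed
  have "prod_prob L \<pi> n (\<lambda>P. \<exists>ab\<in>{..<m} \<times> {..<m}. bad ab P)
      \<le> (\<Sum>ab\<in>{..<m} \<times> {..<m}. prod_prob L \<pi> n (bad ab))"
    by (rule prod_prob_union_bound[OF prob]) simp
  also have "\<dots> \<le> card ({..<m} \<times> {..<m}) * (2 / real n ^ 4)"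
    using sum_mono[of "{..<m} \<times> {..<m}" _ "\<lambda>_. 2 / real n ^ 4"] each by simp
  also have "\<dots> \<le> n * (2 / real n ^ 4)"
    using card_cells_le[of R n] R_large(1) R(2) unfolding m_def by (intro mult_right_mono) auto
  also have "\<dots> \<le> 1 / (real n)\<^sup>2" using n by (simp add: divide_simps eval_nat_numeral)
  finally have "prod_prob L \<pi> n (\<lambda>P. \<not> (\<forall>a<m. \<forall>b<m. \<not> bad (a, b) P)) \<le> 1 / (real n)\<^sup>2"
    by (simp add: Bex_def)
  then show ?thesis
    using prod_prob_compl[OF prob, of n "\<lambda>P. \<forall>a<m. \<forall>b<m. \<not> bad (a, b) P"]
    unfolding config_prob_eq bad_def m_def L_def \<pi>_def by simp
qed

theorem mainTheorem4:
  shows "\<exists>c::real. c > 0 \<and> (\<exists>lam::real. lam \<ge> 1 \<and> (\<exists>N::nat. \<forall>n\<ge>N.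
     \<forall>(r::real) (\<epsilon>::real) (R::real) cell.
       r \<ge> 0 \<and> 0 < \<epsilon> \<and> \<epsilon> \<le> 1 \<and> \<epsilon> < R \<and>
       c * sqrt (ln (real n)) \<le> R \<and> R \<le> sqrt (real n) \<and>
       valid_assignment n \<epsilon> (num_cells n R) cell \<longrightarrow>
       config_prob n r \<epsilon>
         (\<lambda>P. \<forall>a<num_cells n R. \<forall>b<num_cells n R.
                R^2 / lam \<le> real (cell_count n cell P (a, b)) \<and>
                real (cell_count n cell P (a, b)) \<le> lam * R^2)
       \<ge> 1 - 1 / (real n)^2))"
proof -
  have "(0::real) < 128" "(1::real) \<le> 4096" by simp_all
  then show ?thesis using cells_balanced_whp by blast
qed

end
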